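(* For every $n\geq 1$, in the field $\mathbb{Q}(t)$, $$B_{n+1}(t)=A_n(t)B_n(t)-B_{n-1}(t),\qquad\text{where } A_n(t)=t^{-\mu(n)}\left(2\,\frac{t^{\mu(n)}-1}{t-1}+t\right).$$
   Context: The Stern polynomials $B_n(t)\in\mathbb{Z}[t]$ are defined by $B_0(t)=0$, $B_1(t)=1$, and for $n\geq 1$: $B_{2n}(t)=tB_n(t)$, $B_{2n+1}(t)=B_n(t)+B_{n+1}(t)$. For $n\geq 1$, $\mu(n)$ denotes the exponent of the highest power of $2$ dividing $n$. Note $\frac{t^{m}-1}{t-1}=1+t+\dots+t^{m-1}$ (equal to $0$ for $m=0$). *)

theory Defs
  imports "HOL-Computational_Algebra.Polynomial" "HOL-Computational_Algebra.Fraction_Field"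
    "HOL-Computational_Algebra.Factorial_Ring"
begin

function stern :: "nat \<Rightarrow> int poly" where
  "stern n = (if n = 0 then 0 else if n = 1 then 1
              else if even n then [:0, 1:] * stern (n div 2)
              else stern (n div 2) + stern (n div 2 + 1))"
  by auto
termination
  by (relation "measure id") (auto elim!: oddE)

definition to_Qt :: "int poly \<Rightarrow> rat poly fract" where
  "to_Qt p = Fract (map_poly of_int p) 1"

definition tQ :: "rat poly fract" where
  "tQ = Fract [:0, 1:] 1"

definition mu :: "nat \<Rightarrow> nat" where
  "mu n = multiplicity (2::nat) n"

definition A_coef :: "nat \<Rightarrow> rat poly fract" where
  "A_coef n = inverse (tQ ^ mu n) * (2 * ((tQ ^ mu n - 1) / (tQ - 1)) + tQ)"

end

theory Submission
  imports Defs
begin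

(* Write b_n = B_n(t) viewed in Q(t) and m = mu(n).  Since t^m is invertible,
   the theorem is equivalent to the polynomial identity

       t^m (b_{n+1} + b_{n-1}) = (2 G_m + t) b_n,   G_m = (t^m - 1)/(t - 1),

   which we prove by strong induction on n, splitting on parity:
   - n = 2k+1: here m = 0, G_0 = 0, and the Stern recursions give
     b_{n+1} + b_{n-1} = t (b_{k+1} + b_k) = t b_n directly;
   - n = 2k:   here mu(n) = mu(k) + 1, b_n = t b_k, and the sum b_{n+1} + b_{n-1}
     equals 2 b_k + (b_{k+1} + b_{k-1}); the induction hypothesis for k together
     with the geometric-sum step G_{m+1} = G_m + t^m closes the case. *)

declare stern.simps [simp del]

lemma stern_0: "stern 0 = 0"
  by (simp add: stern.simps)

lemma stern_double: "k \<ge> 1 \<Longrightarrow> stern (2 * k) = [:0, 1:] * stern k"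
  by (subst stern.simps) simp

lemma stern_double_Suc: "stern (2 * k + 1) = stern k + stern (k + 1)"
proof (cases "k = 0")
  case True
  then show ?thesis
    by (simp add: stern.simps)
next
  case False
  then show ?thesis
    by (subst stern.simps) simp
qed

lemma to_Qt_0: "to_Qt 0 = 0"
  by (simp add: to_Qt_def Zero_fract_def)

lemma to_Qt_add: "to_Qt (p + q) = to_Qt p + to_Qt q"
proof -
  have "map_poly rat_of_int (p + q) = map_poly rat_of_int p + map_poly rat_of_int q"
    by (rule poly_eqI) (simp add: coeff_map_poly)
  then show ?thesis
    unfolding to_Qt_def by simp
qed

lemma to_Qt_times_X: "to_Qt (pCons 0 p) = tQ * to_Qt p"
proof -
  have "map_poly rat_of_int (pCons 0 p) = [:0, 1:] * map_poly rat_of_int p"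
    by (simp add: map_poly_pCons)
  then show ?thesis
    unfolding to_Qt_def tQ_def by simp
qed

lemma tQ_nonzero: "tQ \<noteq> 0"
  unfolding tQ_def by (simp add: eq_fract Zero_fract_def)

lemma tQ_not_one: "tQ \<noteq> 1"
proof -
  have "degree [:0, 1 :: rat:] \<noteq> degree (1 :: rat poly)"
    by simp
  then have "[:0, 1:] \<noteq> (1 :: rat poly)"
    by metis
  then show ?thesis
    unfolding tQ_def by (simp add: One_fract_def eq_fract)
qed

lemma mu_odd: "mu (2 * k + 1) = 0"
  unfolding mu_def by (rule not_dvd_imp_multiplicity_0) presburger

lemma mu_double: "k \<ge> 1 \<Longrightarrow> mu (2 * k) = Suc (mu k)"
  unfolding mu_def by (rule multiplicity_times_same) auto

definition geom_sum :: "nat \<Rightarrow> 'a :: field \<Rightarrow> 'a" where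
  "geom_sum m x = (x ^ m - 1) / (x - 1)"

lemma geom_sum_0 [simp]: "geom_sum 0 x = 0"
  by (simp add: geom_sum_def)

lemma geom_sum_Suc:
  assumes "x \<noteq> 1"
  shows "geom_sum (Suc m) x = geom_sum m x + x ^ m"
proof -
  have "x - 1 \<noteq> 0"
    using assms by simp
  then show ?thesis
    unfolding geom_sum_def by (simp add: field_simps)
qed

abbreviation b :: "nat \<Rightarrow> rat poly fract" where
  "b n \<equiv> to_Qt (stern n)"

lemma cleared_recursion_odd:
  "tQ ^ mu (2 * k + 1) * (b (2 * k + 2) + b (2 * k))
     = (2 * geom_sum (mu (2 * k + 1)) tQ + tQ) * b (2 * k + 1)"
proof -
  have next_term: "b (2 * k + 2) = tQ * b (k + 1)"
    using stern_double[of "k + 1"] by (simp add: to_Qt_times_X)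
  have prev_term: "b (2 * k) = tQ * b k"
    by (cases "k = 0") (simp_all add: stern_0 to_Qt_0 stern_double to_Qt_times_X)
  have this_term: "b (2 * k + 1) = b k + b (k + 1)"
    using stern_double_Suc[of k] by (simp add: to_Qt_add)
  show ?thesis
    using this_term next_term prev_term mu_odd[of k] by (simp add: algebra_simps)
qed

lemma cleared_recursion_double:
  assumes k: "k \<ge> 1"
    and IH: "tQ ^ mu k * (b (k + 1) + b (k - 1)) = (2 * geom_sum (mu k) tQ + tQ) * b k"
  shows "tQ ^ mu (2 * k) * (b (2 * k + 1) + b (2 * k - 1))
           = (2 * geom_sum (mu (2 * k)) tQ + tQ) * b (2 * k)"
proof -
  have next_term: "b (2 * k + 1) = b k + b (k + 1)"
    using stern_double_Suc[of k] by (simp add: to_Qt_add)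
  have "2 * k - 1 = 2 * (k - 1) + 1" "k - 1 + 1 = k"
    using k by auto
  then have prev_term: "b (2 * k - 1) = b (k - 1) + b k"
    using stern_double_Suc[of "k - 1"] by (simp add: to_Qt_add)
  have this_term: "b (2 * k) = tQ * b k"
    using stern_double[OF k] by (simp add: to_Qt_times_X)
  have "tQ ^ mu (2 * k) * (b (2 * k + 1) + b (2 * k - 1))
          = 2 * tQ ^ Suc (mu k) * b k + tQ * (tQ ^ mu k * (b (k + 1) + b (k - 1)))"
    using next_term prev_term mu_double[OF k] by (simp add: algebra_simps)
  also have "\<dots> = tQ * (2 * (geom_sum (mu k) tQ + tQ ^ mu k) + tQ) * b k"
    using IH by (simp add: algebra_simps)
  also have "\<dots> = (2 * geom_sum (mu (2 * k)) tQ + tQ) * b (2 * k)"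
    using this_term mu_double[OF k] by (simp add: geom_sum_Suc[OF tQ_not_one] algebra_simps)
  finally show ?thesis .
qed

lemma cleared_recursion:
  "n \<ge> 1 \<Longrightarrow> tQ ^ mu n * (b (n + 1) + b (n - 1)) = (2 * geom_sum (mu n) tQ + tQ) * b n"
proof (induction n rule: less_induct)
  case (less n)
  show ?case
  proof (cases "even n")
    case True
    then obtain k where n: "n = 2 * k"
      by blast
    with less.prems have "k \<ge> 1"
      by simp
    with less.IH[of k] n show ?thesis
      using cleared_recursion_double by simp
  next
    case False
    then obtain k where "n = 2 * k + 1"
      by (metis oddE)
    then show ?thesis
      using cleared_recursion_odd[of k] by (simp add: numeral_2_eq_2)
  qed
qed

theorem mainTheorem12:
  fixes n :: nat
  assumes "n \<ge> 1"
  shows "to_Qt (stern (n + 1)) = A_coef n * to_Qt (stern n) - to_Qt (stern (n - 1))"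
proof -
  have "tQ ^ mu n \<noteq> 0"
    using tQ_nonzero by simp
  then have "A_coef n * b n = b (n + 1) + b (n - 1)"
    using cleared_recursion[OF assms]
    unfolding A_coef_def geom_sum_def by (simp add: field_simps)
  then show ?thesis
    by simp
qed

end
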